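(* Let $m\ge 2$, $c\ge 0$, and let $x=((x^1,n_1),\dots,(x^q,n_q))$ (with $q\ge 2$) be a non-convergent Nash equilibrium of the best-worst rule $s=(c,m)$. Then $n_1\ge 2$ and $n_q\ge 2$, and moreover $0<x^1$ and $x^q<1$.
   Context: Setting: voters' ideal points are distributed uniformly (unit mass, Lebesgue measure) on $[0,1]$. There are $m$ candidates; a profile is $x=(x_1,\dots,x_m)\in[0,1]^m$. A voter with ideal point $y$ ranks candidates by distance $|x_i-y|$ (closer is better); ties are broken by a fair lottery (uniformly random strict order among tied candidates). Under the best-worst rule $s=(c,m)$ ($c\ge0$), a candidate receives $1$ point from each voter ranking her first, $-c$ from each voter ranking her last ($m$-th), and $0$ otherwise; $v_i(x)$ is candidate $i$'s expected total points. A (pure-strategy Nash) equilibrium is a profile $x^*$ with $v_i(x^* )\ge v_i(t,x^*_{-i})$ for all $i$ and $t\in[0,1]$ ($(t,x_{-i})$ is $x$ with $x_i$ replaced by $t$); it is non-convergent (NCNE) if at least two platforms are distinct. A profile determines its distinct occupied positions $x^1<\dots<x^q$, with $n_j$ the number of candidates at $x^j$; we write $x=((x^1,n_1),\dots,(x^q,n_q))$. *)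

theory Defs
  imports "HOL-Analysis.Analysis"
begin

(* Candidates are indexed 0..m-1; a profile is x :: nat => real (only x 0..x (m-1) matter). *)

definition min_dist :: "nat \<Rightarrow> (nat \<Rightarrow> real) \<Rightarrow> real \<Rightarrow> real" where
  "min_dist m x y = Min ((\<lambda>j. \<bar>x j - y\<bar>) ` {..<m})"

definition max_dist :: "nat \<Rightarrow> (nat \<Rightarrow> real) \<Rightarrow> real \<Rightarrow> real" where
  "max_dist m x y = Max ((\<lambda>j. \<bar>x j - y\<bar>) ` {..<m})"

(* probability that voter y ranks candidate i first (fair lottery among tied candidates) *)
definition prob_first :: "nat \<Rightarrow> (nat \<Rightarrow> real) \<Rightarrow> nat \<Rightarrow> real \<Rightarrow> real" where
  "prob_first m x i y =
     (if \<bar>x i - y\<bar> = min_dist m x y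
      then 1 / real (card {j. j < m \<and> \<bar>x j - y\<bar> = min_dist m x y}) else 0)"

definition prob_last :: "nat \<Rightarrow> (nat \<Rightarrow> real) \<Rightarrow> nat \<Rightarrow> real \<Rightarrow> real" where
  "prob_last m x i y =
     (if \<bar>x i - y\<bar> = max_dist m x y
      then 1 / real (card {j. j < m \<and> \<bar>x j - y\<bar> = max_dist m x y}) else 0)"

(* expected score v_i(x) under best-worst rule (c,m), voters uniform on [0,1] *)
definition bw_score :: "real \<Rightarrow> nat \<Rightarrow> (nat \<Rightarrow> real) \<Rightarrow> nat \<Rightarrow> real" where
  "bw_score c m x i = integral {0..1} (\<lambda>y. prob_first m x i y - c * prob_last m x i y)"

definition is_profile :: "nat \<Rightarrow> (nat \<Rightarrow> real) \<Rightarrow> bool" where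
  "is_profile m x \<longleftrightarrow> (\<forall>i<m. x i \<in> {0..1})"

definition bw_equilibrium :: "real \<Rightarrow> nat \<Rightarrow> (nat \<Rightarrow> real) \<Rightarrow> bool" where
  "bw_equilibrium c m x \<longleftrightarrow> is_profile m x \<and>
     (\<forall>i<m. \<forall>t\<in>{0..1}. bw_score c m x i \<ge> bw_score c m (x(i := t)) i)"

definition positions :: "nat \<Rightarrow> (nat \<Rightarrow> real) \<Rightarrow> real set" where
  "positions m x = x ` {..<m}"

definition mult_at :: "nat \<Rightarrow> (nat \<Rightarrow> real) \<Rightarrow> real \<Rightarrow> nat" where
  "mult_at m x p = card {i. i < m \<and> x i = p}"

end

theory Submission
  imports Defs
begin

text \<open>A lone leftmost candidate profits by moving halfway towards the next occupied position:
pointwise she is ranked first at least as often and last at most as often, and she becomes the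
sole favourite of a set of voters she previously did not win. If the leftmost position is shared
but equals 0, one of the candidates there profits by moving slightly to the right: she is then
never ranked last, and on an interval of positive length she becomes the sole favourite instead
of sharing at most half of the first places. Reflecting \<open>y \<mapsto> 1 - y\<close> turns these statements
about the leftmost position into the ones about the rightmost position.\<close>

definition voter_points :: "real \<Rightarrow> nat \<Rightarrow> (nat \<Rightarrow> real) \<Rightarrow> nat \<Rightarrow> real \<Rightarrow> real" where
  "voter_points c m x i y = prob_first m x i y - c * prob_last m x i y"

lemma bw_score_eq_integral: "bw_score c m x i = integral {0..1} (voter_points c m x i)"
  by (simp add: bw_score_def voter_points_def[abs_def])

lemma real_card_eq_sum_of_bool:
  "real (card {j. j < (m::nat) \<and> P j}) = (\<Sum>j<m. of_bool (P j))"
proof -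
  have "{j. j < m \<and> P j} = {..<m} \<inter> {j. P j}" by auto
  then show ?thesis by simp
qed

lemma borel_measurable_prob_first[measurable]: "prob_first m x i \<in> borel_measurable borel"
  unfolding prob_first_def min_dist_def real_card_eq_sum_of_bool by measurable

lemma borel_measurable_prob_last[measurable]: "prob_last m x i \<in> borel_measurable borel"
  unfolding prob_last_def max_dist_def real_card_eq_sum_of_bool by measurable

lemma one_div_of_nat_le_1: "1 / real (n::nat) \<le> 1"
  by (cases n) auto

lemma prob_first_nonneg: "0 \<le> prob_first m x i y"
  by (simp add: prob_first_def)

lemma prob_first_le_1: "prob_first m x i y \<le> 1"
  by (simp add: prob_first_def one_div_of_nat_le_1)

lemma prob_last_nonneg: "0 \<le> prob_last m x i y"
  by (simp add: prob_last_def)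

lemma prob_last_le_1: "prob_last m x i y \<le> 1"
  by (simp add: prob_last_def one_div_of_nat_le_1)

lemma min_dist_le: "j < m \<Longrightarrow> min_dist m x y \<le> \<bar>x j - y\<bar>"
  unfolding min_dist_def by (rule Min_le) auto

lemma max_dist_ge: "j < m \<Longrightarrow> \<bar>x j - y\<bar> \<le> max_dist m x y"
  unfolding max_dist_def by (rule Max_ge) auto

lemma prob_first_eq_1:
  assumes "i < m" "\<And>j. j < m \<Longrightarrow> j \<noteq> i \<Longrightarrow> \<bar>x i - y\<bar> < \<bar>x j - y\<bar>"
  shows "prob_first m x i y = 1"
proof -
  have md: "min_dist m x y = \<bar>x i - y\<bar>"
    unfolding min_dist_def using assms by (intro Min_eqI) (fastforce intro: less_imp_le)+
  then have "{j. j < m \<and> \<bar>x j - y\<bar> = min_dist m x y} = {i}"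
    using assms by fastforce
  then show ?thesis using md by (simp add: prob_first_def)
qed

lemma prob_first_eq_0:
  assumes "j < m" "\<bar>x j - y\<bar> < \<bar>x i - y\<bar>"
  shows "prob_first m x i y = 0"
  using min_dist_le[OF assms(1), of x y] assms(2) by (simp add: prob_first_def)

lemma prob_last_eq_1:
  assumes "i < m" "\<And>j. j < m \<Longrightarrow> j \<noteq> i \<Longrightarrow> \<bar>x j - y\<bar> < \<bar>x i - y\<bar>"
  shows "prob_last m x i y = 1"
proof -
  have md: "max_dist m x y = \<bar>x i - y\<bar>"
    unfolding max_dist_def using assms by (intro Max_eqI) (fastforce intro: less_imp_le)+
  then have "{j. j < m \<and> \<bar>x j - y\<bar> = max_dist m x y} = {i}"
    using assms by fastforce
  then show ?thesis using md by (simp add: prob_last_def)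
qed

lemma prob_last_eq_0:
  assumes "j < m" "\<bar>x i - y\<bar> < \<bar>x j - y\<bar>"
  shows "prob_last m x i y = 0"
  using max_dist_ge[OF assms(1), of x y] assms(2) by (simp add: prob_last_def)

lemma prob_first_le_inverse_mult_at:
  assumes "i < m"
  shows "prob_first m x i y \<le> 1 / real (mult_at m x (x i))"
proof (cases "\<bar>x i - y\<bar> = min_dist m x y")
  case True
  have "{j. j < m \<and> x j = x i} \<subseteq> {j. j < m \<and> \<bar>x j - y\<bar> = min_dist m x y}"
    using True by auto
  then have "mult_at m x (x i) \<le> card {j. j < m \<and> \<bar>x j - y\<bar> = min_dist m x y}"
    unfolding mult_at_def by (intro card_mono) auto
  moreover have "0 < mult_at m x (x i)"
    unfolding mult_at_def using assms by (auto simp: card_gt_0_iff)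
  ultimately show ?thesis
    using True by (simp add: prob_first_def frac_le)
qed (simp add: prob_first_def)

lemma prob_last_eq_0_between:
  assumes "j1 < m" "j2 < m" "x j1 < x i" "x i < x j2"
  shows "prob_last m x i y = 0"
proof (cases "y \<le> x i")
  case True
  then show ?thesis using assms by (intro prob_last_eq_0[OF assms(2)]) auto
next
  case False
  then show ?thesis using assms by (intro prob_last_eq_0[OF assms(1)]) auto
qed

lemma prob_first_move_right_ge:
  assumes "i < m" "x i \<le> t" "\<And>j. j < m \<Longrightarrow> j \<noteq> i \<Longrightarrow> t < x j"
  shows "prob_first m x i y \<le> prob_first m (x(i := t)) i y"
proof (cases "prob_first m x i y = 0 \<or> x i = t")
  case True
  then show ?thesis using prob_first_nonneg by (metis fun_upd_triv order_refl)
next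
  case False
  then have closest: "\<bar>x i - y\<bar> \<le> \<bar>x j - y\<bar>" if "j < m" for j
    using min_dist_le[of j m x y] that by (auto simp: prob_first_def split: if_splits)
  have "prob_first m (x(i := t)) i y = 1"
  proof (rule prob_first_eq_1[OF assms(1)])
    fix j assume "j < m" "j \<noteq> i"
    then show "\<bar>(x(i := t)) i - y\<bar> < \<bar>(x(i := t)) j - y\<bar>"
      using closest[of j] assms(2) assms(3)[of j] False by auto
  qed
  then show ?thesis using prob_first_le_1 by simp
qed

lemma prob_last_move_right_le:
  assumes "i < m" "k < m" "k \<noteq> i" "x i \<le> t" "\<And>j. j < m \<Longrightarrow> j \<noteq> i \<Longrightarrow> t < x j"
  shows "prob_last m (x(i := t)) i y \<le> prob_last m x i y"
proof (cases "prob_last m (x(i := t)) i y = 0 \<or> x i = t")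
  case True
  then show ?thesis using prob_last_nonneg by (metis fun_upd_triv order_refl)
next
  case False
  then have farthest: "\<bar>x j - y\<bar> \<le> \<bar>t - y\<bar>" if "j < m" "j \<noteq> i" for j
    using max_dist_ge[of j m "x(i := t)" y] that
    by (auto simp: prob_last_def split: if_splits)
  have "t \<le> y"
    using farthest[OF assms(2,3)] assms(5)[OF assms(2,3)] by auto
  have "prob_last m x i y = 1"
  proof (rule prob_last_eq_1[OF assms(1)])
    fix j assume "j < m" "j \<noteq> i"
    then show "\<bar>x j - y\<bar> < \<bar>x i - y\<bar>"
      using farthest[of j] \<open>t \<le> y\<close> assms(4) False by auto
  qed
  then show ?thesis using prob_last_le_1 by simp
qed

lemma integrable_voter_points: "voter_points c m x i integrable_on {a..b}"
proof (rule measurable_bounded_by_integrable_imp_integrable_real[where g="\<lambda>_. 1 + \<bar>c\<bar>"])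
  have "voter_points c m x i \<in> borel_measurable lebesgue"
    unfolding voter_points_def[abs_def]
    by (intro measurable_completion) simp
  then show "voter_points c m x i \<in> borel_measurable (lebesgue_on {a..b})"
    by (rule measurable_restrict_space1)
  show "\<bar>voter_points c m x i y\<bar> \<le> 1 + \<bar>c\<bar>" for y
  proof -
    have "\<bar>c * prob_last m x i y\<bar> \<le> \<bar>c\<bar>"
      using prob_last_nonneg[of m x i y] prob_last_le_1[of m x i y] by (simp add: abs_mult mult_left_le)
    then show ?thesis
      using prob_first_nonneg[of m x i y] prob_first_le_1[of m x i y]
      unfolding voter_points_def by linarith
  qed
qed auto

lemma integral_ge_const_real:
  fixes h :: "real \<Rightarrow> real"
  assumes "h integrable_on {a..b}" "a \<le> b" "\<And>y. y \<in> {a..b} \<Longrightarrow> k \<le> h y"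
  shows "k * (b - a) \<le> integral {a..b} h"
proof -
  have "integral {a..b} (\<lambda>_. k) \<le> integral {a..b} h"
    by (rule integral_le) (use assms in auto)
  then show ?thesis using assms(2) by (simp add: mult.commute)
qed

lemma integral_ge_three_steps_real:
  fixes h :: "real \<Rightarrow> real"
  assumes "h integrable_on {a..d}" "a \<le> b" "b \<le> c" "c \<le> d"
    and "\<And>y. y \<in> {a..b} \<Longrightarrow> k\<^sub>1 \<le> h y"
    and "\<And>y. y \<in> {b..c} \<Longrightarrow> k\<^sub>2 \<le> h y"
    and "\<And>y. y \<in> {c..d} \<Longrightarrow> k\<^sub>3 \<le> h y"
  shows "k\<^sub>1 * (b - a) + k\<^sub>2 * (c - b) + k\<^sub>3 * (d - c) \<le> integral {a..d} h"
proof -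
  have int: "h integrable_on {a..b}" "h integrable_on {b..c}" "h integrable_on {c..d}"
    using assms(1-4) by (auto intro: integrable_on_subinterval)
  have "integral {a..d} h = integral {a..c} h + integral {c..d} h"
    using assms(1-4) by (intro Henstock_Kurzweil_Integration.integral_combine[symmetric]) auto
  also have "integral {a..c} h = integral {a..b} h + integral {b..c} h"
    using assms(1-4) by (intro Henstock_Kurzweil_Integration.integral_combine[symmetric]) (auto intro: integrable_on_subinterval)
  finally show ?thesis
    using integral_ge_const_real[OF int(1) assms(2,5)] integral_ge_const_real[OF int(2) assms(3,6)]
      integral_ge_const_real[OF int(3) assms(4,7)]
    by linarith
qed

definition deviation_gain :: "real \<Rightarrow> nat \<Rightarrow> (nat \<Rightarrow> real) \<Rightarrow> nat \<Rightarrow> real \<Rightarrow> real \<Rightarrow> real" where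
  "deviation_gain c m x i t y = voter_points c m (x(i := t)) i y - voter_points c m x i y"

lemma deviation_gain_ge_first_gain:
  assumes "0 \<le> c" "prob_last m (x(i := t)) i y \<le> prob_last m x i y"
  shows "prob_first m (x(i := t)) i y - prob_first m x i y \<le> deviation_gain c m x i t y"
  using mult_left_mono[OF assms(2,1)] by (simp add: deviation_gain_def voter_points_def)

lemma bw_equilibrium_deviation_gain_step_bound:
  assumes "bw_equilibrium c m x" "i < m" "t \<in> {0..1}" "0 \<le> p" "p \<le> q" "q \<le> 1"
    and "\<And>y. y \<in> {0..p} \<Longrightarrow> k\<^sub>1 \<le> deviation_gain c m x i t y"
    and "\<And>y. y \<in> {p..q} \<Longrightarrow> k\<^sub>2 \<le> deviation_gain c m x i t y"
    and "\<And>y. y \<in> {q..1} \<Longrightarrow> k\<^sub>3 \<le> deviation_gain c m x i t y"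
  shows "k\<^sub>1 * p + k\<^sub>2 * (q - p) + k\<^sub>3 * (1 - q) \<le> 0"
proof -
  have "integral {0..1} (deviation_gain c m x i t)
          = bw_score c m (x(i := t)) i - bw_score c m x i"
    unfolding bw_score_eq_integral deviation_gain_def[abs_def]
    by (simp add: integral_diff integrable_voter_points)
  also have "\<dots> \<le> 0"
    using assms(1-3) by (simp add: bw_equilibrium_def)
  finally show ?thesis
    using integral_ge_three_steps_real[of "deviation_gain c m x i t" 0 1 p q, OF _ assms(4-9)]
    by (simp add: deviation_gain_def[abs_def] integrable_diff integrable_voter_points)
qed

lemma finite_positions: "finite (positions m x)"
  by (simp add: positions_def)

lemma Min_positions_le: "j < m \<Longrightarrow> Min (positions m x) \<le> x j"
  by (simp add: finite_positions positions_def)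

lemma Min_positions_in:
  assumes "positions m x \<noteq> {}"
  obtains i where "i < m" "x i = Min (positions m x)"
  using Min_in[OF finite_positions assms] by (auto simp: positions_def)

lemma next_position_exists:
  assumes "2 \<le> card (positions m x)"
  obtains k where "k < m" "Min (positions m x) < x k"
    "\<And>j. j < m \<Longrightarrow> x j \<noteq> Min (positions m x) \<Longrightarrow> x k \<le> x j"
proof -
  let ?P = "positions m x" and ?a = "Min (positions m x)"
  have "card ?P \<noteq> 1"
    using assms by simp
  then have "?P \<noteq> {?a}"
    by (metis is_singletonI is_singleton_altdef)
  moreover have "?P \<noteq> {}"
    using assms by auto
  ultimately have ne: "?P - {?a} \<noteq> {}"
    by auto
  have "Min (?P - {?a}) \<in> ?P"
    using Min_in[OF _ ne] finite_positions by auto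
  then obtain k where k: "k < m" "x k = Min (?P - {?a})"
    unfolding positions_def by (metis imageE lessThan_iff)
  have "x k \<noteq> ?a"
    using k Min_in[OF _ ne] finite_positions by auto
  show ?thesis
  proof
    show "?a < x k"
      using \<open>x k \<noteq> ?a\<close> Min_positions_le[OF k(1), of x] by simp
    show "x k \<le> x j" if "j < m" "x j \<noteq> ?a" for j
      using k that by (auto simp: finite_positions positions_def)
  qed fact
qed

lemma two_le_mult_at_iff:
  "2 \<le> mult_at m x p \<longleftrightarrow> (\<exists>i<m. \<exists>j<m. i \<noteq> j \<and> x i = p \<and> x j = p)"
proof
  let ?S = "{k. k < m \<and> x k = p}"
  assume "2 \<le> mult_at m x p"
  then have "2 \<le> card ?S"
    by (simp add: mult_at_def)
  then obtain i where i: "i \<in> ?S"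
    by (metis card.empty ex_in_conv not_numeral_le_zero)
  have "card (?S - {i}) \<noteq> 0"
    using \<open>2 \<le> card ?S\<close> i by simp
  then obtain j where "j \<in> ?S - {i}"
    by (metis card.empty ex_in_conv)
  then show "\<exists>i<m. \<exists>j<m. i \<noteq> j \<and> x i = p \<and> x j = p"
    using i by blast
next
  assume "\<exists>i<m. \<exists>j<m. i \<noteq> j \<and> x i = p \<and> x j = p"
  then obtain i j where "i < m" "j < m" "i \<noteq> j" "x i = p" "x j = p"
    by blast
  then have "card {i, j} \<le> mult_at m x p"
    unfolding mult_at_def by (intro card_mono) auto
  then show "2 \<le> mult_at m x p"
    using \<open>i \<noteq> j\<close> by simp
qed

lemma bw_equilibrium_in_unit_interval:
  "bw_equilibrium c m x \<Longrightarrow> j < m \<Longrightarrow> x j \<in> {0..1}"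
  by (simp add: bw_equilibrium_def is_profile_def)

lemma bw_equilibrium_two_le_mult_at_Min:
  assumes "0 \<le> c" "bw_equilibrium c m x" "2 \<le> card (positions m x)"
  shows "2 \<le> mult_at m x (Min (positions m x))"
proof (rule ccontr)
  let ?a = "Min (positions m x)"
  assume "\<not> 2 \<le> mult_at m x ?a"
  obtain i where i: "i < m" "x i = ?a"
    using Min_positions_in assms(3) by (metis card.empty not_numeral_le_zero)
  then have lone: "x j \<noteq> ?a" if "j < m" "j \<noteq> i" for j
    using \<open>\<not> 2 \<le> mult_at m x ?a\<close> that two_le_mult_at_iff by metis
  obtain k where k: "k < m" "?a < x k" "\<And>j. j < m \<Longrightarrow> x j \<noteq> ?a \<Longrightarrow> x k \<le> x j"
    using next_position_exists[OF assms(3)] by blast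
  have "x i < x k"
    using i(2) k(2) by simp
  define t where "t = (x i + x k) / 2"
  have "k \<noteq> i" "x i < t" "t < x k"
    using \<open>x i < x k\<close> by (auto simp: t_def)
  have right: "t < x j" if "j < m" "j \<noteq> i" for j
    using \<open>t < x k\<close> k(3)[OF that(1) lone[OF that]] by simp
  have "t \<in> {0..1}"
    using bw_equilibrium_in_unit_interval[OF assms(2) i(1)]
      bw_equilibrium_in_unit_interval[OF assms(2) k(1)] \<open>x i < t\<close> \<open>t < x k\<close> by auto
  have gain_ge_first:
    "prob_first m (x(i := t)) i y - prob_first m x i y \<le> deviation_gain c m x i t y" for y
    using \<open>x i < t\<close> right
    by (intro deviation_gain_ge_first_gain[OF assms(1)] prob_last_move_right_le[OF i(1) k(1) \<open>k \<noteq> i\<close>])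
      auto
  have gain_nonneg: "0 \<le> deviation_gain c m x i t y" for y
    using gain_ge_first[of y] prob_first_move_right_ge[of i m x t y, OF i(1) _ right] \<open>x i < t\<close>
    by fastforce
  \<comment> \<open>\<open>{p..q}\<close> lies strictly between the midpoints of \<open>x i, x k\<close> and of \<open>t, x k\<close>\<close>
  define p where "p = (3 * t + x k) / 4"
  define q where "q = (5 * t + 3 * x k) / 8"
  have gain_1: "1 \<le> deviation_gain c m x i t y" if "y \<in> {p..q}" for y
  proof -
    have y: "t < y" "y < (t + x k) / 2"
      using that \<open>t < x k\<close> unfolding p_def q_def atLeastAtMost_iff by (auto simp: field_simps)
    have "prob_first m x i y = 0"
      by (rule prob_first_eq_0[OF k(1)]) (use y \<open>x i < t\<close> in \<open>auto simp: t_def abs_if\<close>)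
    moreover have "prob_first m (x(i := t)) i y = 1"
    proof (rule prob_first_eq_1[OF i(1)])
      fix j assume "j < m" "j \<noteq> i"
      then show "\<bar>(x(i := t)) i - y\<bar> < \<bar>(x(i := t)) j - y\<bar>"
        using y right[of j] k(3)[of j] lone[of j] by (auto simp: abs_if)
    qed
    ultimately show ?thesis
      using gain_ge_first[of y] by simp
  qed
  have "0 \<le> p" "p < q" "q \<le> 1"
    using \<open>t \<in> {0..1}\<close> \<open>t < x k\<close> bw_equilibrium_in_unit_interval[OF assms(2) k(1)]
    by (auto simp: p_def q_def)
  then have "0 * p + 1 * (q - p) + 0 * (1 - q) \<le> 0"
    using gain_nonneg gain_1
    by (intro bw_equilibrium_deviation_gain_step_bound[OF assms(2) i(1) \<open>t \<in> {0..1}\<close>]) auto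
  then show False
    using \<open>p < q\<close> by simp
qed

lemma bw_equilibrium_Min_positions_pos:
  assumes "0 \<le> c" "bw_equilibrium c m x" "2 \<le> card (positions m x)"
  shows "0 < Min (positions m x)"
proof (rule ccontr)
  let ?a = "Min (positions m x)"
  assume "\<not> 0 < ?a"
  have shared: "2 \<le> mult_at m x ?a"
    by (rule bw_equilibrium_two_le_mult_at_Min[OF assms])
  then obtain i i' where i: "i < m" "i' < m" "i \<noteq> i'" "x i = ?a" "x i' = ?a"
    using two_le_mult_at_iff by metis
  have "x i = 0"
    using \<open>\<not> 0 < ?a\<close> i(4) bw_equilibrium_in_unit_interval[OF assms(2) i(1)] by simp
  obtain k where k: "k < m" "?a < x k" "\<And>j. j < m \<Longrightarrow> x j \<noteq> ?a \<Longrightarrow> x k \<le> x j"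
    using next_position_exists[OF assms(3)] by blast
  have "0 < x k"
    using k(2) i(4) \<open>x i = 0\<close> by simp
  have others: "x j = 0 \<or> x k \<le> x j" if "j < m" for j
    using k(3)[OF that] i(4) \<open>x i = 0\<close> by auto
  \<comment> \<open>any \<open>t \<in> (0, x k / 6)\<close> makes the step bound below positive\<close>
  define t where "t = x k / 8"
  have "0 < t" "t < x k" "t \<in> {0..1}"
    using \<open>0 < x k\<close> bw_equilibrium_in_unit_interval[OF assms(2) k(1)] by (auto simp: t_def)
  have "prob_last m (x(i := t)) i y = 0" for y
    by (rule prob_last_eq_0_between[of i' m k "x(i := t)" i])
      (use i k \<open>x i = 0\<close> \<open>0 < t\<close> \<open>t < x k\<close> in auto)
  then have gain_ge_first:
    "prob_first m (x(i := t)) i y - prob_first m x i y \<le> deviation_gain c m x i t y" for y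
    using deviation_gain_ge_first_gain[OF assms(1)] prob_last_nonneg by metis
  have first_after: "prob_first m (x(i := t)) i y = 1" if "t \<le> y" "y \<le> x k / 2" for y
  proof (rule prob_first_eq_1[OF i(1)])
    fix j assume "j < m" "j \<noteq> i"
    then show "\<bar>(x(i := t)) i - y\<bar> < \<bar>(x(i := t)) j - y\<bar>"
      using others[of j] that \<open>0 < t\<close> by (auto simp: t_def abs_if)
  qed
  have first_before_half: "prob_first m x i y \<le> 1 / 2" for y
  proof -
    have "1 / real (mult_at m x ?a) \<le> 1 / 2"
      using shared by (intro divide_left_mono) auto
    then show ?thesis
      using prob_first_le_inverse_mult_at[OF i(1), of x y] i(4) by simp
  qed
  have first_before_0: "prob_first m x i y = 0" if "x k / 2 < y" for y
    by (rule prob_first_eq_0[OF k(1)]) (use that \<open>x i = 0\<close> \<open>0 < x k\<close> in \<open>auto simp: abs_if\<close>)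
  have "-1 \<le> deviation_gain c m x i t y" for y
    using gain_ge_first[of y] prob_first_nonneg[of m "x(i := t)" i y] prob_first_le_1[of m x i y]
    by simp
  moreover have "1 / 2 \<le> deviation_gain c m x i t y" if "y \<in> {t..x k / 2}" for y
    using gain_ge_first[of y] first_after[of y] first_before_half[of y] that by simp
  moreover have "0 \<le> deviation_gain c m x i t y" if "y \<in> {x k / 2..1}" for y
  proof (cases "y = x k / 2")
    case True
    then show ?thesis
      using gain_ge_first[of y] first_after[of y] prob_first_le_1[of m x i y] \<open>t < x k\<close>
      by (simp add: t_def)
  next
    case False
    then show ?thesis
      using gain_ge_first[of y] first_before_0[of y] prob_first_nonneg[of m "x(i := t)" i y] that
      by simp
  qed
  moreover have "x k / 2 \<le> 1"
    using bw_equilibrium_in_unit_interval[OF assms(2) k(1)] by simp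
  ultimately have "-1 * t + 1 / 2 * (x k / 2 - t) + 0 * (1 - x k / 2) \<le> 0"
    using \<open>0 < t\<close>
    by (intro bw_equilibrium_deviation_gain_step_bound[OF assms(2) i(1) \<open>t \<in> {0..1}\<close>])
      (auto simp: t_def)
  then show False
    using \<open>0 < x k\<close> by (simp add: t_def)
qed

lemma prob_first_reflect: "prob_first m (\<lambda>j. 1 - x j) i y = prob_first m x i (1 - y)"
  unfolding prob_first_def min_dist_def by (simp add: abs_minus_commute algebra_simps)

lemma prob_last_reflect: "prob_last m (\<lambda>j. 1 - x j) i y = prob_last m x i (1 - y)"
  unfolding prob_last_def max_dist_def by (simp add: abs_minus_commute algebra_simps)

lemma bw_score_reflect: "bw_score c m (\<lambda>j. 1 - x j) i = bw_score c m x i"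
proof -
  let ?f = "voter_points c m x i"
  have "(?f has_integral integral {0..1} ?f) (cbox 0 1)"
    using integrable_voter_points by (simp add: integrable_integral)
  from has_integral_affinity[OF this, of "-1" 1]
  have "((\<lambda>y. ?f (1 - y)) has_integral integral {0..1} ?f) {0..1}"
    by (simp add: image_affinity_atLeastAtMost)
  moreover have "voter_points c m (\<lambda>j. 1 - x j) i = (\<lambda>y. ?f (1 - y))"
    by (simp add: fun_eq_iff voter_points_def prob_first_reflect prob_last_reflect)
  ultimately show ?thesis
    unfolding bw_score_eq_integral by (simp add: integral_unique)
qed

lemma bw_equilibrium_reflect:
  assumes "bw_equilibrium c m x"
  shows "bw_equilibrium c m (\<lambda>j. 1 - x j)"
  unfolding bw_equilibrium_def
proof (intro conjI allI impI ballI)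
  show "is_profile m (\<lambda>j. 1 - x j)"
    using assms by (auto simp: bw_equilibrium_def is_profile_def)
  fix i t assume "i < m" "t \<in> {0..1::real}"
  have "(\<lambda>j. 1 - x j)(i := t) = (\<lambda>j. 1 - (x(i := 1 - t)) j)"
    by auto
  moreover have "bw_score c m (x(i := 1 - t)) i \<le> bw_score c m x i"
    using assms \<open>i < m\<close> \<open>t \<in> {0..1}\<close> by (auto simp: bw_equilibrium_def)
  ultimately show "bw_score c m ((\<lambda>j. 1 - x j)(i := t)) i \<le> bw_score c m (\<lambda>j. 1 - x j) i"
    by (simp only: bw_score_reflect)
qed

lemma positions_reflect: "positions m (\<lambda>j. 1 - x j) = (\<lambda>p. 1 - p) ` positions m x"
  by (auto simp: positions_def)

lemma card_positions_reflect: "card (positions m (\<lambda>j. 1 - x j)) = card (positions m x)"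
  unfolding positions_reflect by (rule card_image) (simp add: inj_on_def)

lemma Min_positions_reflect:
  assumes "positions m x \<noteq> {}"
  shows "Min (positions m (\<lambda>j. 1 - x j)) = 1 - Max (positions m x)"
  unfolding positions_reflect
proof (rule Min_eqI)
  show "1 - Max (positions m x) \<in> (\<lambda>p. 1 - p) ` positions m x"
    using Max_in[OF finite_positions assms] by simp
qed (auto simp: finite_positions)

lemma mult_at_reflect: "mult_at m (\<lambda>j. 1 - x j) (1 - p) = mult_at m x p"
  by (simp add: mult_at_def)

theorem lemma1:
  fixes c :: real and m :: nat and x :: "nat \<Rightarrow> real"
  assumes "m \<ge> 2" and "c \<ge> 0"
    and "bw_equilibrium c m x"
    and "card (positions m x) \<ge> 2"
  shows "mult_at m x (Min (positions m x)) \<ge> 2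
       \<and> mult_at m x (Max (positions m x)) \<ge> 2
       \<and> 0 < Min (positions m x) \<and> Max (positions m x) < 1"
proof -
  let ?r = "\<lambda>j. 1 - x j"
  have reflected: "0 \<le> c" "bw_equilibrium c m ?r" "2 \<le> card (positions m ?r)"
    using assms bw_equilibrium_reflect card_positions_reflect by auto
  have "positions m x \<noteq> {}"
    using assms(4) by auto
  then have "Min (positions m ?r) = 1 - Max (positions m x)"
    by (rule Min_positions_reflect)
  then show ?thesis
    using bw_equilibrium_two_le_mult_at_Min[OF reflected] bw_equilibrium_Min_positions_pos[OF reflected]
      bw_equilibrium_two_le_mult_at_Min[OF assms(2-4)] bw_equilibrium_Min_positions_pos[OF assms(2-4)]
    by (simp add: mult_at_reflect)
qed

end
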